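(* Let $\mathcal{P}$ be a (weakly connected) collection of cells whose connected components are $\mathcal{P}_1,\dots,\mathcal{P}_n$. For each $i$ let $\tilde{r}_{\mathcal{P}_i}(t)$ be the switching rook polynomial of $\mathcal{P}_i$. Then $\prod_{i=1}^n \tilde{r}_{\mathcal{P}_i}(t)$ is the switching rook polynomial of $\mathcal{P}$.
   Context: For $a=(a_1,a_2)\le b=(b_1,b_2)$ in $\mathbb{Z}^2$ (componentwise order), the interval $[a,b]$ is $\{(m,n)\in\mathbb{Z}^2: a_1\le m\le b_1,\ a_2\le n\le b_2\}$; it is proper if $a_1<b_1$ and $a_2<b_2$. A cell is a proper interval $[a,a+(1,1)]$, with lower left corner $a$; its vertices are its four points. A collection of cells is a finite non-empty set $\mathcal{P}$ of cells; it is weakly connected if any two of its cells are joined by a sequence of cells of $\mathcal{P}$ in which consecutive cells share a vertex (throughout, "collection of cells" means a weakly connected one). A path in $\mathcal{P}$ is a sequence of distinct cells of $\mathcal{P}$, consecutive ones sharing an edge; a polyomino is a collection of cells in which any two cells are joined by a path; a connected component of $\mathcal{P}$ is a subset which is a polyomino and is maximal with this property. An inner interval of $\mathcal{P}$ is a proper interval all of whose cells belong to $\mathcal{P}$. A cell interval of $\mathcal{P}$ is a set of cells of $\mathcal{P}$ whose lower left corners form the points of an interval $[(i,j),(k,l)]$ with $i=k$ or $j=l$ (vertical or horizontal). Two rooks placed in cells of $\mathcal{P}$ are non-attacking if they do not lie in a common horizontal or vertical cell interval contained in $\mathcal{P}$; a $k$-rook configuration is a set of $k$ pairwise non-attacking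 rooks in cells of $\mathcal{P}$, and $r(\mathcal{P})$ is the maximum such $k$. Two non-attacking rooks are switching if they occupy cells $A,B$ with lower left corners $(i,j),(k,l)$, $i\ne k$, $j\neq l$, such that all cells of the inner interval spanned by $A$ and $B$ lie in $\mathcal{P}$ (i.e. $A,B$ are diagonal or anti-diagonal cells of a rectangle of $\mathcal{P}$); a switch replaces them by rooks in the cells with lower left corners $(i,l)$ and $(k,j)$. Two $k$-rook configurations are equivalent if one is obtained from the other by a finite sequence of switches. If $\tilde r_k$ is the number of equivalence classes of $k$-rook configurations ($\tilde r_0=1$), the switching rook polynomial of $\mathcal{P}$ is $\tilde r_{\mathcal{P}}(t)=\sum_{k=0}^{r(\mathcal{P})}\tilde r_k t^k$. *)

theory Defs
  imports "HOL-Computational_Algebra.Polynomial"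
begin

text \<open>A cell is identified with its lower left corner in int x int.
  A set of cells is thus an (int \<times> int) set.\<close>

type_synonym cell = "int \<times> int"

definition share_vertex :: "cell \<Rightarrow> cell \<Rightarrow> bool" where
  "share_vertex A B \<longleftrightarrow> \<bar>fst A - fst B\<bar> \<le> 1 \<and> \<bar>snd A - snd B\<bar> \<le> 1"

definition share_edge :: "cell \<Rightarrow> cell \<Rightarrow> bool" where
  "share_edge A B \<longleftrightarrow> \<bar>fst A - fst B\<bar> + \<bar>snd A - snd B\<bar> = 1"

definition weakly_connected :: "cell set \<Rightarrow> bool" where
  "weakly_connected P \<longleftrightarrow> (\<forall>A\<in>P. \<forall>B\<in>P. \<exists>xs. xs \<noteq> [] \<and> hd xs = A \<and> last xs = B \<and>
      set xs \<subseteq> P \<and> (\<forall>i. Suc i < length xs \<longrightarrow> share_vertex (xs ! i) (xs ! Suc i)))"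

definition collection :: "cell set \<Rightarrow> bool" where
  "collection P \<longleftrightarrow> finite P \<and> P \<noteq> {} \<and> weakly_connected P"

definition is_path :: "cell set \<Rightarrow> cell list \<Rightarrow> bool" where
  "is_path P xs \<longleftrightarrow> xs \<noteq> [] \<and> distinct xs \<and> set xs \<subseteq> P \<and>
      (\<forall>i. Suc i < length xs \<longrightarrow> share_edge (xs ! i) (xs ! Suc i))"

definition polyomino :: "cell set \<Rightarrow> bool" where
  "polyomino P \<longleftrightarrow> collection P \<and>
     (\<forall>A\<in>P. \<forall>B\<in>P. \<exists>xs. is_path P xs \<and> hd xs = A \<and> last xs = B)"

definition components :: "cell set \<Rightarrow> cell set set" where
  "components P = {Q. Q \<subseteq> P \<and> polyomino Q \<and>
      (\<forall>Q'. Q \<subseteq> Q' \<and> Q' \<subseteq> P \<and> polyomino Q' \<longrightarrow> Q' = Q)}"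

definition attacking :: "cell set \<Rightarrow> cell \<Rightarrow> cell \<Rightarrow> bool" where
  "attacking P A B \<longleftrightarrow>
     (snd A = snd B \<and> (\<forall>x. min (fst A) (fst B) \<le> x \<and> x \<le> max (fst A) (fst B) \<longrightarrow> (x, snd A) \<in> P)) \<or>
     (fst A = fst B \<and> (\<forall>y. min (snd A) (snd B) \<le> y \<and> y \<le> max (snd A) (snd B) \<longrightarrow> (fst A, y) \<in> P))"

definition rook_config :: "cell set \<Rightarrow> cell set \<Rightarrow> bool" where
  "rook_config P C \<longleftrightarrow> C \<subseteq> P \<and> (\<forall>A\<in>C. \<forall>B\<in>C. A \<noteq> B \<longrightarrow> \<not> attacking P A B)"

definition k_rook_configs :: "cell set \<Rightarrow> nat \<Rightarrow> cell set set" where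
  "k_rook_configs P k = {C. rook_config P C \<and> card C = k}"

definition rook_number :: "cell set \<Rightarrow> nat" where
  "rook_number P = Max {card C | C. rook_config P C}"

definition switch :: "cell set \<Rightarrow> cell set \<Rightarrow> cell set \<Rightarrow> bool" where
  "switch P C D \<longleftrightarrow> (\<exists>i j k l. (i, j) \<in> C \<and> (k, l) \<in> C \<and> i \<noteq> k \<and> j \<noteq> l \<and>
      (\<forall>x y. min i k \<le> x \<and> x \<le> max i k \<and> min j l \<le> y \<and> y \<le> max j l \<longrightarrow> (x, y) \<in> P) \<and>
      D = (C - {(i, j), (k, l)}) \<union> {(i, l), (k, j)})"

definition switch_equiv :: "cell set \<Rightarrow> nat \<Rightarrow> (cell set \<times> cell set) set" where
  "switch_equiv P k = {(C, D). C \<in> k_rook_configs P k \<and> D \<in> k_rook_configs P k \<and>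
      (switch P)\<^sup>*\<^sup>* C D}"

definition switching_rook_number :: "cell set \<Rightarrow> nat \<Rightarrow> nat" where
  "switching_rook_number P k = card (k_rook_configs P k // switch_equiv P k)"

definition switching_rook_poly :: "cell set \<Rightarrow> int poly" where
  "switching_rook_poly P =
     (\<Sum>k\<le>rook_number P. monom (int (switching_rook_number P k)) k)"

end

theory Submission
  imports Defs "HOL-Library.Transitive_Closure_Table"
begin

(* Two distinct connected components A and B of P are separated: they share no cell and no edge.
   Walking along a row or a column never steps from A to B, so every rectangle ("box") of cells
   contained in A \<union> B lies entirely in A or entirely in B. Cell intervals are degenerate boxes
   and a switch takes place in a box, hence attacks, rook configurations and switches of A \<union> B
   split into those of A and of B: a k-rook configuration of A \<union> B is the union of an
   i-configuration of A and a (k - i)-configuration of B, and its switching class is the set of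
   unions of their classes. The numbers of classes are therefore a convolution, the switching
   rook polynomial is multiplicative on separated unions, and induction over the components
   gives the product formula. *)

section \<open>Boxes and separated unions\<close>

definition separated :: "cell set \<Rightarrow> cell set \<Rightarrow> bool" where
  "separated A B \<longleftrightarrow> A \<inter> B = {} \<and> (\<forall>a\<in>A. \<forall>b\<in>B. \<not> share_edge a b)"

lemma share_edge_commute: "share_edge a b \<longleftrightarrow> share_edge b a"
  by (auto simp: share_edge_def abs_minus_commute)

lemma separated_commute: "separated A B \<longleftrightarrow> separated B A"
  by (auto simp: separated_def share_edge_commute)

lemma separated_Union: "(\<And>Q. Q \<in> S \<Longrightarrow> separated A Q) \<Longrightarrow> separated A (\<Union>S)"
  by (auto simp: separated_def)

lemma separated_edge_same_side:
  assumes "separated A B" "a \<in> A \<union> B" "b \<in> A \<union> B" "share_edge a b"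
  shows "a \<in> A \<longleftrightarrow> b \<in> A"
  using assms by (auto simp: separated_def share_edge_commute)

lemma separated_segment_same_side:
  fixes f :: "int \<Rightarrow> cell"
  assumes sep: "separated A B"
    and edge: "\<And>t. share_edge (f t) (f (t + 1))"
    and seg: "\<And>t. lo \<le> t \<Longrightarrow> t \<le> hi \<Longrightarrow> f t \<in> A \<union> B"
    and "lo \<le> s" "s \<le> hi" "lo \<le> t" "t \<le> hi"
  shows "f s \<in> A \<longleftrightarrow> f t \<in> A"
proof -
  have "t \<le> hi \<longrightarrow> (f t \<in> A \<longleftrightarrow> f lo \<in> A)" if "lo \<le> t" for t
    using that
  proof (induction t rule: int_ge_induct)
    case (step t)
    then show ?case
      using separated_edge_same_side[OF sep seg seg edge, of t] by auto
  qed simp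
  then show ?thesis
    using assms by blast
qed

definition box :: "cell \<Rightarrow> cell \<Rightarrow> cell set" where
  "box a b = {min (fst a) (fst b)..max (fst a) (fst b)} \<times> {min (snd a) (snd b)..max (snd a) (snd b)}"

lemma corners_in_box: "a \<in> box a b" "b \<in> box a b"
  by (auto simp: box_def mem_Times_iff)

lemma switched_corners_in_box: "(i, l) \<in> box (i, j) (k, l)" "(k, j) \<in> box (i, j) (k, l)"
  by (auto simp: box_def)

lemma box_subset_iff:
  "box (i, j) (k, l) \<subseteq> P \<longleftrightarrow>
     (\<forall>x y. min i k \<le> x \<and> x \<le> max i k \<and> min j l \<le> y \<and> y \<le> max j l \<longrightarrow> (x, y) \<in> P)"
  by (auto simp: box_def)

lemma separated_box_same_side:
  assumes sep: "separated A B" and box: "box a b \<subseteq> A \<union> B" and a: "a \<in> A"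
  shows "box a b \<subseteq> A"
proof
  fix c
  assume "c \<in> box a b"
  obtain i j k l x y where ab: "a = (i, j)" "b = (k, l)" and c: "c = (x, y)"
    by (cases a, cases b, cases c)
  have x: "min i k \<le> x" "x \<le> max i k" and y: "min j l \<le> y" "y \<le> max j l"
    using \<open>c \<in> box a b\<close> by (auto simp: box_def ab c)
  have in_box: "(s, t) \<in> A \<union> B"
    if "min i k \<le> s" "s \<le> max i k" "min j l \<le> t" "t \<le> max j l" for s t
    using box that by (auto simp: box_def ab subset_iff)
  have "(i, y) \<in> A"
    using separated_segment_same_side[OF sep, where f = "\<lambda>t. (i, t)" and lo = "min j l"
        and hi = "max j l" and s = j and t = y]
      in_box y a by (auto simp: share_edge_def ab)
  then show "c \<in> A"
    using separated_segment_same_side[OF sep, where f = "\<lambda>s. (s, y)" and lo = "min i k"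
        and hi = "max i k" and s = i and t = x]
      in_box x y by (auto simp: share_edge_def c)
qed

lemma separated_box_side:
  assumes sep: "separated A B" and box: "box a b \<subseteq> A \<union> B"
  shows "box a b \<subseteq> A \<or> box a b \<subseteq> B"
proof (cases "a \<in> A")
  case True
  then show ?thesis
    using separated_box_same_side[OF sep box] by blast
next
  case False
  then have "a \<in> B"
    using box corners_in_box by blast
  moreover have "separated B A" "box a b \<subseteq> B \<union> A"
    using sep box by (auto simp: separated_commute)
  ultimately show ?thesis
    using separated_box_same_side by blast
qed

lemma attacking_iff_box:
  "attacking P a b \<longleftrightarrow> (fst a = fst b \<or> snd a = snd b) \<and> box a b \<subseteq> P"
  by (cases a, cases b) (auto simp: attacking_def box_def subset_iff)

lemma attacking_mem: "attacking P a b \<Longrightarrow> a \<in> P \<and> b \<in> P"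
  by (meson attacking_iff_box corners_in_box subsetD)

lemma attacking_mono: "attacking P a b \<Longrightarrow> P \<subseteq> Q \<Longrightarrow> attacking Q a b"
  by (auto simp: attacking_iff_box)

lemma attacking_union_separated:
  assumes sep: "separated A B"
  shows "attacking (A \<union> B) a b \<longleftrightarrow> attacking A a b \<or> attacking B a b"
proof
  assume "attacking (A \<union> B) a b"
  then have box: "box a b \<subseteq> A \<union> B" and "fst a = fst b \<or> snd a = snd b"
    by (simp_all add: attacking_iff_box)
  moreover have "box a b \<subseteq> A \<or> box a b \<subseteq> B"
    using separated_box_side[OF sep box] .
  ultimately show "attacking A a b \<or> attacking B a b"
    by (auto simp: attacking_iff_box)
qed (auto elim: attacking_mono)

lemma rook_config_union_separated:
  assumes "separated A B"
  shows "rook_config (A \<union> B) C \<longleftrightarrow>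
    C \<subseteq> A \<union> B \<and> rook_config A (C \<inter> A) \<and> rook_config B (C \<inter> B)"
proof -
  have "\<not> attacking (A \<union> B) a b \<longleftrightarrow>
      (a \<in> A \<and> b \<in> A \<longrightarrow> \<not> attacking A a b) \<and> (a \<in> B \<and> b \<in> B \<longrightarrow> \<not> attacking B a b)" for a b
    using attacking_union_separated[OF assms] attacking_mem[of A a b] attacking_mem[of B a b]
    by blast
  then show ?thesis
    unfolding rook_config_def by blast
qed

lemma k_rook_configs_subset: "C \<in> k_rook_configs P k \<Longrightarrow> C \<subseteq> P"
  by (simp add: k_rook_configs_def rook_config_def)

lemma k_rook_configs_union_separated:
  assumes sep: "separated A B" and fin: "finite A" "finite B"
    and C: "C \<in> k_rook_configs A i" and D: "D \<in> k_rook_configs B j"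
  shows "C \<union> D \<in> k_rook_configs (A \<union> B) (i + j)"
proof -
  have CA: "C \<subseteq> A" and DB: "D \<subseteq> B"
    using C D by (simp_all add: k_rook_configs_subset)
  moreover have disj: "A \<inter> B = {}"
    using sep by (simp add: separated_def)
  ultimately have "(C \<union> D) \<inter> A = C" "(C \<union> D) \<inter> B = D"
    by blast+
  then have "rook_config (A \<union> B) (C \<union> D)"
    using C D CA DB by (auto simp: rook_config_union_separated[OF sep] k_rook_configs_def)
  moreover have "card (C \<union> D) = i + j"
    using C D CA DB disj finite_subset[OF CA fin(1)] finite_subset[OF DB fin(2)]
    by (subst card_Un_disjoint) (auto simp: k_rook_configs_def)
  ultimately show ?thesis
    by (simp add: k_rook_configs_def)
qed

lemma k_rook_configs_Int_separated:
  assumes sep: "separated A B" and fin: "finite A" "finite B"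
    and E: "E \<in> k_rook_configs (A \<union> B) n"
  shows "card (E \<inter> A) \<le> n" "E \<inter> A \<in> k_rook_configs A (card (E \<inter> A))"
    "E \<inter> B \<in> k_rook_configs B (n - card (E \<inter> A))"
proof -
  have E_parts: "E \<subseteq> A \<union> B" "rook_config A (E \<inter> A)" "rook_config B (E \<inter> B)"
    using E by (simp_all add: k_rook_configs_def rook_config_union_separated[OF sep])
  then have "E = (E \<inter> A) \<union> (E \<inter> B)" and "finite E"
    using fin finite_subset by blast+
  moreover have "(E \<inter> A) \<inter> (E \<inter> B) = {}"
    using sep by (auto simp: separated_def)
  ultimately have "card (E \<inter> A) + card (E \<inter> B) = n"
    using E card_Un_disjoint[of "E \<inter> A" "E \<inter> B"] by (simp add: k_rook_configs_def)
  then show "card (E \<inter> A) \<le> n" "E \<inter> A \<in> k_rook_configs A (card (E \<inter> A))"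
    "E \<inter> B \<in> k_rook_configs B (n - card (E \<inter> A))"
    using E_parts by (auto simp: k_rook_configs_def)
qed

lemma switch_iff_box:
  "switch P C D \<longleftrightarrow> (\<exists>i j k l. (i, j) \<in> C \<and> (k, l) \<in> C \<and> i \<noteq> k \<and> j \<noteq> l \<and>
     box (i, j) (k, l) \<subseteq> P \<and> D = C - {(i, j), (k, l)} \<union> {(i, l), (k, j)})"
  by (simp add: switch_def box_subset_iff)

lemma switch_restrict_to_part:
  assumes disj: "A \<inter> B = {}"
    and ij: "(i, j) \<in> C" and kl: "(k, l) \<in> C" and "i \<noteq> k" "j \<noteq> l"
    and box: "box (i, j) (k, l) \<subseteq> A"
    and D: "D = C - {(i, j), (k, l)} \<union> {(i, l), (k, j)}"
  shows "switch A (C \<inter> A) (D \<inter> A) \<and> D \<inter> B = C \<inter> B"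
proof -
  have corners: "(i, j) \<in> A" "(k, l) \<in> A" "(i, l) \<in> A" "(k, j) \<in> A"
    using box corners_in_box switched_corners_in_box by blast+
  have "D \<inter> A = C \<inter> A - {(i, j), (k, l)} \<union> {(i, l), (k, j)}"
    using D corners by auto
  then have "switch A (C \<inter> A) (D \<inter> A)"
    using assms corners unfolding switch_iff_box by blast
  moreover have "D \<inter> B = C \<inter> B"
    using D corners disj by auto
  ultimately show ?thesis ..
qed

lemma switch_union_separated:
  assumes sep: "separated A B" and "switch (A \<union> B) C D"
  shows "switch A (C \<inter> A) (D \<inter> A) \<and> D \<inter> B = C \<inter> B \<or>
    switch B (C \<inter> B) (D \<inter> B) \<and> D \<inter> A = C \<inter> A"
proof -
  obtain i j k l where ij: "(i, j) \<in> C" and kl: "(k, l) \<in> C" and "i \<noteq> k" "j \<noteq> l"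
    and box: "box (i, j) (k, l) \<subseteq> A \<union> B"
    and D: "D = C - {(i, j), (k, l)} \<union> {(i, l), (k, j)}"
    using assms(2) unfolding switch_iff_box by blast
  have disj: "A \<inter> B = {}" "B \<inter> A = {}"
    using sep by (auto simp: separated_def)
  from separated_box_side[OF sep box] show ?thesis
    using switch_restrict_to_part[OF disj(1) ij kl _ _ _ D]
      switch_restrict_to_part[OF disj(2) ij kl _ _ _ D] \<open>i \<noteq> k\<close> \<open>j \<noteq> l\<close>
    by blast
qed

lemma rtranclp_switch_union_separated:
  assumes "separated A B" and "(switch (A \<union> B))\<^sup>*\<^sup>* C D"
  shows "(switch A)\<^sup>*\<^sup>* (C \<inter> A) (D \<inter> A) \<and> (switch B)\<^sup>*\<^sup>* (C \<inter> B) (D \<inter> B)"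
  using assms(2)
proof (induction rule: rtranclp_induct)
  case (step D E)
  then show ?case
    using switch_union_separated[OF assms(1) step.hyps(2)]
    by (metis rtranclp.rtrancl_into_rtrancl)
qed simp

lemma switch_extend:
  assumes "A \<subseteq> U" "E \<inter> A = {}" "switch A C D"
  shows "switch U (C \<union> E) (D \<union> E)"
proof -
  obtain i j k l where "(i, j) \<in> C" "(k, l) \<in> C" "i \<noteq> k" "j \<noteq> l"
    and box: "box (i, j) (k, l) \<subseteq> A"
    and D: "D = C - {(i, j), (k, l)} \<union> {(i, l), (k, j)}"
    using assms(3) unfolding switch_iff_box by blast
  have "(i, j) \<notin> E" "(k, l) \<notin> E"
    using box corners_in_box assms(2) by blast+
  then have "D \<union> E = C \<union> E - {(i, j), (k, l)} \<union> {(i, l), (k, j)}"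
    using D by auto
  then show ?thesis
    using assms(1) box \<open>(i, j) \<in> C\<close> \<open>(k, l) \<in> C\<close> \<open>i \<noteq> k\<close> \<open>j \<noteq> l\<close>
    unfolding switch_iff_box by blast
qed

lemma rtranclp_switch_extend:
  assumes "A \<subseteq> U" "E \<inter> A = {}" "(switch A)\<^sup>*\<^sup>* C D"
  shows "(switch U)\<^sup>*\<^sup>* (C \<union> E) (D \<union> E)"
  using assms(3)
  by induction (auto intro: rtranclp.rtrancl_into_rtrancl switch_extend[OF assms(1,2)])

lemma switch_card_le:
  assumes "finite C" "switch P C D"
  shows "finite D \<and> card D \<le> card C"
proof -
  obtain a b a' b' where "a \<in> C" "b \<in> C" "a \<noteq> b" and D: "D = C - {a, b} \<union> {a', b'}"
    using assms(2) unfolding switch_def by blast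
  then have ab: "{a, b} \<subseteq> C"
    by blast
  have "card {a, b} \<le> card C" and "card (C - {a, b}) = card C - card {a, b}"
    using card_mono[OF assms(1) ab] card_Diff_subset[OF _ ab] by auto
  moreover have "card D \<le> card (C - {a, b}) + card {a', b'}"
    unfolding D by (rule card_Un_le)
  moreover have "card {a', b'} \<le> card {a, b}"
    using \<open>a \<noteq> b\<close> by (simp add: card_insert_if)
  ultimately show ?thesis
    using assms(1) D by simp
qed

lemma rtranclp_switch_card_le:
  assumes "finite C" "(switch P)\<^sup>*\<^sup>* C D"
  shows "finite D \<and> card D \<le> card C"
  using assms(2)
proof induction
  case (step D E)
  then show ?case
    using switch_card_le[of D P E] by simp
qed (simp add: assms(1))

section \<open>Switching classes of a separated union\<close>

abbreviation switch_classes :: "cell set \<Rightarrow> nat \<Rightarrow> cell set set set" where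
  "switch_classes P k \<equiv> k_rook_configs P k // switch_equiv P k"

lemma switch_classes_nonempty_subset:
  assumes "X \<in> switch_classes P k"
  shows "X \<noteq> {} \<and> X \<subseteq> k_rook_configs P k"
proof -
  obtain C where "C \<in> k_rook_configs P k" and X: "X = switch_equiv P k `` {C}"
    using assms by (rule quotientE)
  then have "C \<in> X"
    by (simp add: switch_equiv_def)
  then show ?thesis
    using X by (auto simp: switch_equiv_def)
qed

lemma finite_switch_classes: "finite P \<Longrightarrow> finite (switch_classes P k)"
  by (rule finite_quotient)
     (auto simp: k_rook_configs_def rook_config_def switch_equiv_def
       intro: finite_subset[of _ "Pow P"])

definition pairwise_unions :: "'a set set \<Rightarrow> 'a set set \<Rightarrow> 'a set set" where
  "pairwise_unions X Y = {C \<union> D | C D. C \<in> X \<and> D \<in> Y}"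

lemma pairwise_unions_commute: "pairwise_unions X Y = pairwise_unions Y X"
  unfolding pairwise_unions_def by (auto simp: Un_commute)

lemma pairwise_unions_Int:
  assumes "X \<subseteq> Pow A" "Y \<subseteq> Pow B" "A \<inter> B = {}" "Y \<noteq> {}"
  shows "(\<lambda>Z. Z \<inter> A) ` pairwise_unions X Y = X"
proof (intro equalityI subsetI)
  have part: "(C \<union> D) \<inter> A = C" if "C \<in> X" "D \<in> Y" for C D
    using assms that by blast
  fix C
  assume "C \<in> (\<lambda>Z. Z \<inter> A) ` pairwise_unions X Y"
  then show "C \<in> X"
    unfolding pairwise_unions_def using part by auto
next
  fix C
  assume "C \<in> X"
  moreover obtain D where "D \<in> Y"
    using assms(4) by blast
  moreover have "(C \<union> D) \<inter> A = C"
    using assms calculation by blast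
  ultimately show "C \<in> (\<lambda>Z. Z \<inter> A) ` pairwise_unions X Y"
    unfolding pairwise_unions_def by blast
qed

lemma switch_class_union_separated:
  assumes sep: "separated A B" and fin: "finite A" "finite B"
    and C0: "C0 \<in> k_rook_configs A i" and D0: "D0 \<in> k_rook_configs B j"
  shows "switch_equiv (A \<union> B) (i + j) `` {C0 \<union> D0} =
    pairwise_unions (switch_equiv A i `` {C0}) (switch_equiv B j `` {D0})"
proof -
  have disj: "A \<inter> B = {}"
    using sep by (simp add: separated_def)
  have C0A: "C0 \<subseteq> A" and D0B: "D0 \<subseteq> B"
    using C0 D0 by (simp_all add: k_rook_configs_subset)
  show ?thesis
  proof (intro equalityI subsetI)
    fix Z
    assume "Z \<in> switch_equiv (A \<union> B) (i + j) `` {C0 \<union> D0}"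
    then have Z: "Z \<in> k_rook_configs (A \<union> B) (i + j)"
      and sw: "(switch (A \<union> B))\<^sup>*\<^sup>* (C0 \<union> D0) Z"
      by (simp_all add: switch_equiv_def)
    have "(C0 \<union> D0) \<inter> A = C0" "(C0 \<union> D0) \<inter> B = D0"
      using C0A D0B disj by blast+
    then have swA: "(switch A)\<^sup>*\<^sup>* C0 (Z \<inter> A)" and swB: "(switch B)\<^sup>*\<^sup>* D0 (Z \<inter> B)"
      using rtranclp_switch_union_separated[OF sep sw] by simp_all
    \<comment> \<open>switches never add rooks, and the two parts together keep all \<open>i + j\<close> of them\<close>
    have "card (Z \<inter> A) \<le> i" "card (Z \<inter> B) \<le> j"
      using rtranclp_switch_card_le[OF _ swA] rtranclp_switch_card_le[OF _ swB] C0 D0 C0A D0B fin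
      by (auto simp: k_rook_configs_def intro: finite_subset)
    moreover note k_rook_configs_Int_separated[OF sep fin Z]
    ultimately have "card (Z \<inter> A) = i"
      unfolding k_rook_configs_def by simp
    then have "Z \<inter> A \<in> k_rook_configs A i" "Z \<inter> B \<in> k_rook_configs B j"
      using k_rook_configs_Int_separated[OF sep fin Z] by simp_all
    moreover have "Z = (Z \<inter> A) \<union> (Z \<inter> B)"
      using k_rook_configs_subset[OF Z] by blast
    ultimately show "Z \<in> pairwise_unions (switch_equiv A i `` {C0}) (switch_equiv B j `` {D0})"
      using swA swB C0 D0 unfolding pairwise_unions_def switch_equiv_def by blast
  next
    fix Z
    assume "Z \<in> pairwise_unions (switch_equiv A i `` {C0}) (switch_equiv B j `` {D0})"
    then obtain C D where Z: "Z = C \<union> D"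
      and C: "C \<in> k_rook_configs A i" "(switch A)\<^sup>*\<^sup>* C0 C"
      and D: "D \<in> k_rook_configs B j" "(switch B)\<^sup>*\<^sup>* D0 D"
      by (auto simp: pairwise_unions_def switch_equiv_def)
    have "(switch (A \<union> B))\<^sup>*\<^sup>* (C0 \<union> D0) (C \<union> D0)"
      using rtranclp_switch_extend[of A "A \<union> B" D0] C(2) D0B disj by blast
    moreover have "(switch (A \<union> B))\<^sup>*\<^sup>* (D0 \<union> C) (D \<union> C)"
      using rtranclp_switch_extend[of B "A \<union> B" C] D(2) k_rook_configs_subset[OF C(1)] disj
      by blast
    ultimately have "(switch (A \<union> B))\<^sup>*\<^sup>* (C0 \<union> D0) Z"
      unfolding Z by (simp add: Un_commute)
    then show "Z \<in> switch_equiv (A \<union> B) (i + j) `` {C0 \<union> D0}"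
      using k_rook_configs_union_separated[OF sep fin] C D C0 D0 Z
      by (simp add: switch_equiv_def)
  qed
qed

lemma switching_rook_number_union_separated:
  assumes sep: "separated A B" and fin: "finite A" "finite B"
  shows "switching_rook_number (A \<union> B) n =
    (\<Sum>i\<le>n. switching_rook_number A i * switching_rook_number B (n - i))"
proof -
  define S where "S = (SIGMA i:{..n}. switch_classes A i \<times> switch_classes B (n - i))"
  define h :: "nat \<times> cell set set \<times> cell set set \<Rightarrow> cell set set"
    where "h = (\<lambda>(i, X, Y). pairwise_unions X Y)"
  have disj: "A \<inter> B = {}"
    using sep by (simp add: separated_def)
  have classes: "X \<noteq> {}" "X \<subseteq> k_rook_configs P k" "X \<subseteq> Pow P"
    if "X \<in> switch_classes P k" for X P k
    using switch_classes_nonempty_subset[OF that] k_rook_configs_subset by blast+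
  have "inj_on h S"
  proof (rule inj_onI)
    fix p q
    assume "p \<in> S" "q \<in> S" and hpq: "h p = h q"
    then obtain i X Y i' X' Y' where p: "p = (i, X, Y)" and q: "q = (i', X', Y')"
      and X: "X \<in> switch_classes A i" and Y: "Y \<in> switch_classes B (n - i)"
      and X': "X' \<in> switch_classes A i'" and Y': "Y' \<in> switch_classes B (n - i')"
      unfolding S_def by blast
    have "X = X'"
      using pairwise_unions_Int[OF classes(3)[OF X] classes(3)[OF Y] disj classes(1)[OF Y]]
        pairwise_unions_Int[OF classes(3)[OF X'] classes(3)[OF Y'] disj classes(1)[OF Y']]
        hpq by (simp add: p q h_def)
    moreover have "Y = Y'"
      using pairwise_unions_Int[OF classes(3)[OF Y] classes(3)[OF X] _ classes(1)[OF X]]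
        pairwise_unions_Int[OF classes(3)[OF Y'] classes(3)[OF X'] _ classes(1)[OF X']]
        hpq disj by (simp add: p q h_def pairwise_unions_commute Int_commute)
    moreover have "i = i'"
    proof -
      obtain C where "C \<in> X"
        using classes(1)[OF X] by blast
      then show ?thesis
        using classes(2)[OF X] classes(2)[OF X'] \<open>X = X'\<close> by (auto simp: k_rook_configs_def)
    qed
    ultimately show "p = q"
      by (simp add: p q)
  qed
  moreover have "h ` S = switch_classes (A \<union> B) n"
  proof (intro equalityI subsetI)
    fix Z
    assume "Z \<in> h ` S"
    then obtain i C D where "i \<le> n" and C: "C \<in> k_rook_configs A i"
      and D: "D \<in> k_rook_configs B (n - i)"
      and Z: "Z = pairwise_unions (switch_equiv A i `` {C}) (switch_equiv B (n - i) `` {D})"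
      unfolding S_def h_def by (auto elim!: quotientE)
    then have "Z = switch_equiv (A \<union> B) n `` {C \<union> D}"
      and "C \<union> D \<in> k_rook_configs (A \<union> B) n"
      using switch_class_union_separated[OF sep fin C D]
        k_rook_configs_union_separated[OF sep fin C D] by simp_all
    then show "Z \<in> switch_classes (A \<union> B) n"
      by (simp add: quotientI)
  next
    fix Z
    assume "Z \<in> switch_classes (A \<union> B) n"
    then obtain E where E: "E \<in> k_rook_configs (A \<union> B) n"
      and Z: "Z = switch_equiv (A \<union> B) n `` {E}"
      by (rule quotientE)
    define i where "i = card (E \<inter> A)"
    have i: "i \<le> n" and EA: "E \<inter> A \<in> k_rook_configs A i"
      and EB: "E \<inter> B \<in> k_rook_configs B (n - i)"
      using k_rook_configs_Int_separated[OF sep fin E] by (simp_all add: i_def)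
    have "E = (E \<inter> A) \<union> (E \<inter> B)"
      using k_rook_configs_subset[OF E] by blast
    then have "Z = h (i, switch_equiv A i `` {E \<inter> A}, switch_equiv B (n - i) `` {E \<inter> B})"
      using switch_class_union_separated[OF sep fin EA EB] i Z by (simp add: h_def)
    moreover have "(i, switch_equiv A i `` {E \<inter> A}, switch_equiv B (n - i) `` {E \<inter> B}) \<in> S"
      using i EA EB by (simp add: S_def quotientI)
    ultimately show "Z \<in> h ` S"
      by blast
  qed
  ultimately have "switching_rook_number (A \<union> B) n = card S"
    unfolding switching_rook_number_def by (metis card_image)
  also have "\<dots> = (\<Sum>i\<le>n. switching_rook_number A i * switching_rook_number B (n - i))"
    unfolding S_def switching_rook_number_def
    by (simp add: card_SigmaI finite_switch_classes fin card_cartesian_product)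
  finally show ?thesis .
qed

lemma card_le_rook_number:
  assumes "finite P" "rook_config P C"
  shows "card C \<le> rook_number P"
proof -
  have "{card C | C. rook_config P C} \<subseteq> card ` Pow P"
    unfolding rook_config_def by blast
  then have "finite {card C | C. rook_config P C}"
    using assms(1) finite_subset by blast
  then show ?thesis
    unfolding rook_number_def using assms(2) by (intro Max_ge) auto
qed

lemma coeff_switching_rook_poly:
  assumes "finite P"
  shows "coeff (switching_rook_poly P) n = int (switching_rook_number P n)"
proof (cases "n \<le> rook_number P")
  case False
  then have "k_rook_configs P n = {}"
    using card_le_rook_number[OF assms] by (fastforce simp: k_rook_configs_def)
  then show ?thesis
    using False by (simp add: switching_rook_poly_def coeff_sum switching_rook_number_def)
qed (simp add: switching_rook_poly_def coeff_sum)

lemma switching_rook_poly_union_separated: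
  assumes "separated A B" "finite A" "finite B"
  shows "switching_rook_poly (A \<union> B) = switching_rook_poly A * switching_rook_poly B"
  by (rule poly_eqI)
     (simp add: coeff_mult assms coeff_switching_rook_poly switching_rook_number_union_separated)

lemma switching_rook_poly_Union:
  assumes "finite S" "S \<noteq> {}" "\<And>Q. Q \<in> S \<Longrightarrow> finite Q" "pairwise separated S"
  shows "switching_rook_poly (\<Union>S) = (\<Prod>Q\<in>S. switching_rook_poly Q)"
  using assms
proof (induction S rule: finite_ne_induct)
  case (insert Q S)
  have "separated Q (\<Union>S)"
    using insert.prems(2) insert.hyps(3) by (intro separated_Union) (auto simp: pairwise_def)
  then have "switching_rook_poly (Q \<union> \<Union>S) = switching_rook_poly Q * switching_rook_poly (\<Union>S)"
    using insert.prems(1) insert.hyps(1) by (intro switching_rook_poly_union_separated) auto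
  then show ?case
    using insert by (simp add: pairwise_insert)
qed simp

section \<open>Connected components\<close>

definition adjacent_in :: "cell set \<Rightarrow> cell \<Rightarrow> cell \<Rightarrow> bool" where
  "adjacent_in P a b \<longleftrightarrow> a \<in> P \<and> b \<in> P \<and> share_edge a b"

inductive_simps rtrancl_path_Nil: "rtrancl_path r x [] y"
inductive_simps rtrancl_path_Cons: "rtrancl_path r x (z # zs) y"

lemma rtrancl_path_iff_successively:
  "rtrancl_path r x ys y \<longleftrightarrow> successively r (x # ys) \<and> last (x # ys) = y"
  by (induction ys arbitrary: x) (auto simp: rtrancl_path_Nil rtrancl_path_Cons)

lemma is_path_iff_successively:
  "is_path P xs \<longleftrightarrow> xs \<noteq> [] \<and> distinct xs \<and> set xs \<subseteq> P \<and> successively share_edge xs"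
  by (simp add: is_path_def successively_conv_nth)

lemma successively_adjacent_in_iff:
  assumes "set xs \<subseteq> P"
  shows "successively (adjacent_in P) xs \<longleftrightarrow> successively share_edge xs"
proof
  assume "successively (adjacent_in P) xs"
  then show "successively share_edge xs"
    by (rule successively_mono) (simp add: adjacent_in_def)
next
  assume "successively share_edge xs"
  then show "successively (adjacent_in P) xs"
    by (rule successively_mono) (use assms in \<open>auto simp: adjacent_in_def\<close>)
qed

lemma ex_path_iff_rtranclp:
  assumes "a \<in> P"
  shows "(\<exists>xs. is_path P xs \<and> hd xs = a \<and> last xs = b) \<longleftrightarrow> (adjacent_in P)\<^sup>*\<^sup>* a b"
proof
  assume "\<exists>xs. is_path P xs \<and> hd xs = a \<and> last xs = b"
  then obtain xs where xs: "is_path P xs" "hd xs = a" "last xs = b"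
    by blast
  then have "xs = a # tl xs"
    by (cases xs) (auto simp: is_path_def)
  moreover have "successively (adjacent_in P) xs"
    using xs(1) successively_adjacent_in_iff[of xs P] by (simp add: is_path_iff_successively)
  ultimately have "rtrancl_path (adjacent_in P) a (tl xs) b"
    using xs(3) by (metis rtrancl_path_iff_successively)
  then show "(adjacent_in P)\<^sup>*\<^sup>* a b"
    unfolding rtranclp_eq_rtrancl_path by blast
next
  assume "(adjacent_in P)\<^sup>*\<^sup>* a b"
  then obtain ys where "rtrancl_path (adjacent_in P) a ys b"
    unfolding rtranclp_eq_rtrancl_path by blast
  then obtain ys' where path: "rtrancl_path (adjacent_in P) a ys' b" and "distinct (a # ys')"
    by (rule rtrancl_path_distinct)
  have "set ys' \<subseteq> P"
  proof
    fix z
    assume z: "z \<in> set ys'"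
    obtain y where "adjacent_in P y z"
      using rtrancl_path_Range[OF path z] by (rule RangepE)
    then show "z \<in> P"
      by (simp add: adjacent_in_def)
  qed
  moreover have "successively (adjacent_in P) (a # ys')" "last (a # ys') = b"
    using path by (simp_all add: rtrancl_path_iff_successively)
  ultimately have "is_path P (a # ys')"
    using assms \<open>distinct (a # ys')\<close> successively_adjacent_in_iff[of "a # ys'" P]
    by (simp add: is_path_iff_successively)
  then show "\<exists>xs. is_path P xs \<and> hd xs = a \<and> last xs = b"
    using \<open>last (a # ys') = b\<close> by force
qed

lemma share_edge_imp_share_vertex: "share_edge a b \<Longrightarrow> share_vertex a b"
  by (auto simp: share_edge_def share_vertex_def)

lemma polyomino_iff_edge_connected:
  "polyomino Q \<longleftrightarrow> finite Q \<and> Q \<noteq> {} \<and> (\<forall>a\<in>Q. \<forall>b\<in>Q. (adjacent_in Q)\<^sup>*\<^sup>* a b)"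
proof -
  have "weakly_connected Q"
    if paths: "\<forall>a\<in>Q. \<forall>b\<in>Q. \<exists>xs. is_path Q xs \<and> hd xs = a \<and> last xs = b"
    unfolding weakly_connected_def
  proof (intro ballI)
    fix a b
    assume "a \<in> Q" "b \<in> Q"
    then obtain xs where "is_path Q xs" "hd xs = a" "last xs = b"
      using paths by blast
    then show "\<exists>xs. xs \<noteq> [] \<and> hd xs = a \<and> last xs = b \<and> set xs \<subseteq> Q \<and>
        (\<forall>i. Suc i < length xs \<longrightarrow> share_vertex (xs ! i) (xs ! Suc i))"
      unfolding is_path_def using share_edge_imp_share_vertex by blast
  qed
  moreover have "(\<forall>a\<in>Q. \<forall>b\<in>Q. \<exists>xs. is_path Q xs \<and> hd xs = a \<and> last xs = b) \<longleftrightarrow>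
      (\<forall>a\<in>Q. \<forall>b\<in>Q. (adjacent_in Q)\<^sup>*\<^sup>* a b)"
    by (simp add: ex_path_iff_rtranclp)
  ultimately show ?thesis
    unfolding polyomino_def collection_def by blast
qed

lemma rtranclp_adjacent_in_mono:
  "(adjacent_in P)\<^sup>*\<^sup>* a b \<Longrightarrow> P \<subseteq> Q \<Longrightarrow> (adjacent_in Q)\<^sup>*\<^sup>* a b"
  by (erule rtranclp_mono[THEN predicate2D, rotated]) (auto simp: adjacent_in_def)

lemma rtranclp_adjacent_in_sym: "(adjacent_in P)\<^sup>*\<^sup>* a b \<Longrightarrow> (adjacent_in P)\<^sup>*\<^sup>* b a"
  by (rule sympD[OF symp_rtranclp]) (auto simp: symp_def adjacent_in_def share_edge_commute)

lemma polyomino_union: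
  assumes Q1: "polyomino Q1" and Q2: "polyomino Q2" and "c \<in> Q1" "d \<in> Q2"
    and "c = d \<or> share_edge c d"
  shows "polyomino (Q1 \<union> Q2)"
proof -
  let ?R = "(adjacent_in (Q1 \<union> Q2))\<^sup>*\<^sup>*"
  have in1: "?R a b" if "a \<in> Q1" "b \<in> Q1" for a b
    using Q1 that rtranclp_adjacent_in_mono[of Q1 a b] by (auto simp: polyomino_iff_edge_connected)
  have in2: "?R a b" if "a \<in> Q2" "b \<in> Q2" for a b
    using Q2 that rtranclp_adjacent_in_mono[of Q2 a b] by (auto simp: polyomino_iff_edge_connected)
  have "?R c d"
    using assms(3-5) by (auto simp: adjacent_in_def)
  then have across: "?R a b" if "a \<in> Q1" "b \<in> Q2" for a b
    using in1[OF that(1) \<open>c \<in> Q1\<close>] in2[OF \<open>d \<in> Q2\<close> that(2)] by (meson rtranclp_trans)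
  have "?R a b" if "a \<in> Q1 \<union> Q2" "b \<in> Q1 \<union> Q2" for a b
    using that in1 in2 across rtranclp_adjacent_in_sym by blast
  then show ?thesis
    using Q1 Q2 by (auto simp: polyomino_iff_edge_connected)
qed

lemma components_maximal:
  "Q \<in> components P \<Longrightarrow> Q \<subseteq> Q' \<Longrightarrow> Q' \<subseteq> P \<Longrightarrow> polyomino Q' \<Longrightarrow> Q' = Q"
  by (simp add: components_def)

lemma components_eqI:
  assumes Q1: "Q1 \<in> components P" and Q2: "Q2 \<in> components P"
    and "c \<in> Q1" "d \<in> Q2" "c = d \<or> share_edge c d"
  shows "Q1 = Q2"
proof -
  have union: "Q1 \<subseteq> Q1 \<union> Q2" "Q2 \<subseteq> Q1 \<union> Q2" "Q1 \<union> Q2 \<subseteq> P" "polyomino (Q1 \<union> Q2)"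
    using Q1 Q2 polyomino_union[OF _ _ assms(3-5)] by (auto simp: components_def)
  show ?thesis
    using components_maximal[OF Q1 union(1,3,4)] components_maximal[OF Q2 union(2,3,4)] by simp
qed

lemma pairwise_separated_components: "pairwise separated (components P)"
proof (rule pairwiseI)
  fix Q1 Q2
  assume Q1: "Q1 \<in> components P" and Q2: "Q2 \<in> components P" and "Q1 \<noteq> Q2"
  have "a \<noteq> b \<and> \<not> share_edge a b" if "a \<in> Q1" "b \<in> Q2" for a b
    using components_eqI[OF Q1 Q2 that] \<open>Q1 \<noteq> Q2\<close> by auto
  then show "separated Q1 Q2"
    unfolding separated_def by auto
qed

lemma Union_components:
  assumes "finite P"
  shows "\<Union>(components P) = P"
proof (intro equalityI subsetI)
  fix a
  assume "a \<in> P"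
  define F where "F = {Q. Q \<subseteq> P \<and> polyomino Q}"
  have "{a} \<in> F"
    using \<open>a \<in> P\<close> by (simp add: F_def polyomino_iff_edge_connected)
  moreover have "finite F"
    using assms by (intro finite_subset[of F "Pow P"]) (auto simp: F_def)
  ultimately obtain Q where "Q \<in> F" "{a} \<subseteq> Q" and maximal: "\<forall>Q'\<in>F. Q \<subseteq> Q' \<longrightarrow> Q = Q'"
    using finite_has_maximal2[of F "{a}"] by blast
  have "Q' = Q" if "Q \<subseteq> Q'" "Q' \<subseteq> P" "polyomino Q'" for Q'
    using bspec[OF maximal, of Q'] that by (simp add: F_def)
  moreover have "Q \<subseteq> P" "polyomino Q"
    using \<open>Q \<in> F\<close> by (simp_all add: F_def)
  ultimately have "Q \<in> components P"
    unfolding components_def by blast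
  then show "a \<in> \<Union>(components P)"
    using \<open>{a} \<subseteq> Q\<close> by blast
qed (auto simp: components_def)

lemma finite_components: "finite P \<Longrightarrow> finite (components P)"
  by (rule finite_subset[of _ "Pow P"]) (auto simp: components_def)

theorem lemma1p1:
  assumes "collection P"
  shows "switching_rook_poly P = (\<Prod>Q\<in>components P. switching_rook_poly Q)"
proof -
  have fin: "finite P" and "P \<noteq> {}"
    using assms by (simp_all add: collection_def)
  then have "components P \<noteq> {}"
    using Union_components[OF fin] by auto
  moreover have "finite Q" if "Q \<in> components P" for Q
    using fin that by (auto simp: components_def intro: finite_subset)
  ultimately have "switching_rook_poly (\<Union>(components P)) = (\<Prod>Q\<in>components P. switching_rook_poly Q)"
    by (intro switching_rook_poly_Union finite_components fin pairwise_separated_components)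
  then show ?thesis
    by (simp add: Union_components[OF fin])
qed

end
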